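(* Let $k\geq2$. There exist constants $c,C>0$ and $r_0\geq 1$ depending only on $k$ such that the following holds. For $1\leq i\leq k$ let $B_i\subset\mathbb{R}$ be finite, let $g_i$ be a strictly monotone real function and $A_i=g_i(B_i)$. Let $r\geq r_0$ with $r^{1/(k-1)}\leq |B_i+B_i-B_i|$ for all $i$, and let $X_r=\{x\in A_1+\dots+A_k:\ r\leq r_{A_1+\dots+A_k}(x)<2r\}$. Then for each $x\in X_r$ there are at least $cr$ pairs $(P,P')$ of distinct points $P=(b_1,\dots,b_k)$, $P'=(b_1',\dots,b_k')$ in $B_1\times\dots\times B_k$ such that (1) $g_1(b_1)+\dots+g_k(b_k)=x=g_1(b_1')+\dots+g_k(b_k')$, and (2) $n_{B_i}(b_i,b_i')\leq C\,|B_i+B_i-B_i|/r^{1/(k-1)}$ for all $1\leq i\leq k$.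
   Context: $r_{A_1+\dots+A_k}(x)$ is the number of tuples $(a_1,\dots,a_k)\in A_1\times\dots\times A_k$ with $a_1+\dots+a_k=x$. $B+B-B=\{b_1+b_2-b_3:b_j\in B\}$. For $b,b'\in B$, $n_B(b,b')$ denotes the number of elements of $B+B-B$ lying in the interval $(\min(b,b'),\max(b,b')]$. Such pairs $(P,P')$ are called lucky pairs associated with $x$. *)

theory Defs
  imports Complex_Main "HOL-Library.FuncSet"
begin

text \<open>Tuples (a_0,...,a_{k-1}) in A_0 x ... x A_{k-1} are functions in PiE {..<k} A.\<close>

definition sumset :: "nat \<Rightarrow> (nat \<Rightarrow> real set) \<Rightarrow> real set" where
  "sumset k A = {(\<Sum>i<k. a i) | a. a \<in> PiE {..<k} A}"

definition rep_count :: "nat \<Rightarrow> (nat \<Rightarrow> real set) \<Rightarrow> real \<Rightarrow> nat" where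
  "rep_count k A x = card {a \<in> PiE {..<k} A. (\<Sum>i<k. a i) = x}"

definition BBB :: "real set \<Rightarrow> real set" where
  "BBB B = {b1 + b2 - b3 | b1 b2 b3. b1 \<in> B \<and> b2 \<in> B \<and> b3 \<in> B}"

definition n_B :: "real set \<Rightarrow> real \<Rightarrow> real \<Rightarrow> nat" where
  "n_B B b b' = card (BBB B \<inter> {min b b'<..max b b'})"

definition strictly_monotone :: "(real \<Rightarrow> real) \<Rightarrow> bool" where
  "strictly_monotone g \<longleftrightarrow>
     (\<forall>x y. x < y \<longrightarrow> g x < g y) \<or> (\<forall>x y. x < y \<longrightarrow> g y < g x)"

end

theory Submission
  imports Defs
begin

text \<open>Split each \<open>D\<^sub>i = B\<^sub>i + B\<^sub>i - B\<^sub>i\<close> into \<open>M\<close> blocks of about \<open>|D\<^sub>i|/M\<close>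
  consecutive elements, where \<open>M\<close> is about \<open>r^(1/(k-1))/(2k)\<close>, and label every point \<open>P\<close> of the
  fibre over \<open>x\<close> by the vector of blocks containing its coordinates (reversed where \<open>g\<^sub>i\<close>
  decreases). No label of a point of the fibre is strictly below another one in every coordinate,
  since then all \<open>g\<^sub>i(b\<^sub>i)\<close> and hence their sum would be smaller. So a label is determined by
  its translate with minimum \<open>0\<close>, and there are at most \<open>k M^(k-1) \<le> r/2\<close> labels. By
  pigeonhole at least \<open>r/2\<close> points of the fibre share their label with another point, and two
  points with the same label form a lucky pair.\<close>

lemma card_le_card_collisions_plus_card_image:
  assumes "finite S"
  shows "card S \<le> card {(P, Q). P \<in> S \<and> Q \<in> S \<and> P \<noteq> Q \<and> f P = f Q} + card (f ` S)"
proof -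
  define rep where "rep v = (SOME Q. Q \<in> S \<and> f Q = v)" for v
  define R where "R = rep ` f ` S"
  have rep: "rep (f P) \<in> S \<and> f (rep (f P)) = f P" if "P \<in> S" for P
    unfolding rep_def by (rule someI[of _ P]) (use that in auto)
  have card_R: "card R \<le> card (f ` S)"
    unfolding R_def by (rule card_image_le) (use assms in auto)
  have R_sub: "R \<subseteq> S" unfolding R_def using rep by auto
  let ?T = "{(P, Q). P \<in> S \<and> Q \<in> S \<and> P \<noteq> Q \<and> f P = f Q}"
  have fin_T: "finite ?T" by (rule finite_subset[of _ "S \<times> S"]) (use assms in auto)
  have inj: "inj_on (\<lambda>P. (P, rep (f P))) (S - R)" by (auto intro: inj_onI)
  have sub: "(\<lambda>P. (P, rep (f P))) ` (S - R) \<subseteq> ?T"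
  proof
    fix z assume "z \<in> (\<lambda>P. (P, rep (f P))) ` (S - R)"
    then obtain P where P: "P \<in> S" "P \<notin> R" "z = (P, rep (f P))" by auto
    have "rep (f P) \<in> R" unfolding R_def using P by auto
    then show "z \<in> ?T" using P rep[OF P(1)] by auto
  qed
  have "card (S - R) \<le> card ?T" using card_inj_on_le[OF inj sub fin_T] .
  moreover have "card S = card (S - R) + card R"
    using card_Diff_subset[OF finite_subset[OF R_sub assms] R_sub] card_mono[OF assms R_sub]
    by simp
  ultimately show ?thesis using card_R by linarith
qed

lemma diff_mult_less_if_mult_div_eq:
  fixes a b M q :: nat
  assumes "a \<le> b" "q > 0" "a * M div q = b * M div q"
  shows "(b - a) * M < q"
proof -
  have "b * M < b * M div q * q + q"
    using mod_less_divisor[OF assms(2), of "b * M"] div_mult_mod_eq[of "b * M" q] by linarith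
  moreover have "b * M div q * q \<le> a * M"
    unfolding assms(3)[symmetric] using div_mult_mod_eq[of "a * M" q] by linarith
  ultimately have "b * M < a * M + q" by linarith
  moreover have "a * M \<le> b * M" using assms(1) by simp
  ultimately show ?thesis by (simp add: diff_mult_distrib less_diff_conv2)
qed

lemma finite_BBB: "finite B \<Longrightarrow> finite (BBB B)"
proof -
  assume "finite B"
  have "BBB B = (\<lambda>(a, b, c). a + b - c) ` (B \<times> B \<times> B)" unfolding BBB_def by force
  then show ?thesis using \<open>finite B\<close> by simp
qed

lemma card_PiE_with_zero_le:
  "card {u \<in> PiE {..<k} (\<lambda>_. {..<M::nat}). \<exists>j<k. u j = 0} \<le> k * M ^ (k - 1)"
proof -
  let ?E = "\<lambda>j. PiE {..<k} (\<lambda>i. if i = j then {0} else {..<M})"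
  have card_E: "card (?E j) = M ^ (k - 1)" if "j < k" for j
  proof -
    have "card (?E j) = (\<Prod>i<k. if i = j then 1 else M)"
      by (simp add: card_PiE if_distrib cong: if_cong)
    also have "\<dots> = (\<Prod>i\<in>{..<k} - {j}. M)"
      using that by (subst prod.remove[of _ j]) (auto intro: prod.cong)
    also have "\<dots> = M ^ (k - 1)" using that by simp
    finally show ?thesis .
  qed
  have "{u \<in> PiE {..<k} (\<lambda>_. {..<M}). \<exists>j<k. u j = 0} \<subseteq> (\<Union>j<k. ?E j)"
    by (auto simp: PiE_iff)
  then have "card {u \<in> PiE {..<k} (\<lambda>_. {..<M}). \<exists>j<k. u j = 0} \<le> card (\<Union>j<k. ?E j)"
    by (rule card_mono[rotated]) (auto simp: finite_PiE)
  also have "\<dots> \<le> (\<Sum>j<k. card (?E j))" by (rule card_UN_le) simp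
  also have "\<dots> = k * M ^ (k - 1)" using card_E by simp
  finally show ?thesis .
qed

text \<open>Subtracting the minimum coordinate is injective on such a family.\<close>

lemma card_image_le_if_no_strict_domination:
  fixes F :: "'a \<Rightarrow> nat \<Rightarrow> nat"
  assumes "k > 0"
    and range: "\<And>P. P \<in> S \<Longrightarrow> F P \<in> PiE {..<k} (\<lambda>_. {..<M})"
    and no_dom: "\<And>P Q. P \<in> S \<Longrightarrow> Q \<in> S \<Longrightarrow> \<not> (\<forall>i<k. F P i < F Q i)"
  shows "card (F ` S) \<le> k * M ^ (k - 1)"
proof -
  define L where "L v = (\<lambda>i\<in>{..<k}. v i - Min (v ` {..<k}))" for v :: "nat \<Rightarrow> nat"
  have min_le: "Min (v ` {..<k}) \<le> v i" if "i < k" for v i using that by simp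
  have "inj_on L (F ` S)"
  proof (rule inj_onI)
    fix v w assume "v \<in> F ` S" "w \<in> F ` S" and eq: "L v = L w"
    then obtain P Q where PQ: "P \<in> S" "Q \<in> S" "v = F P" "w = F Q" by auto
    define a where "a = Min (v ` {..<k})"
    define b where "b = Min (w ` {..<k})"
    have shift: "v i + b = w i + a" if "i < k" for i
    proof -
      have "v i - a = w i - b" using fun_cong[OF eq, of i] that unfolding L_def a_def b_def by simp
      then show ?thesis using min_le[OF that, of v] min_le[OF that, of w] unfolding a_def b_def by arith
    qed
    have "a = b"
    proof (rule ccontr)
      assume "a \<noteq> b"
      have "v i < w i \<longleftrightarrow> a < b" "w i < v i \<longleftrightarrow> b < a" if "i < k" for i
        using shift[OF that] by linarith+
      then have "(\<forall>i<k. v i < w i) \<or> (\<forall>i<k. w i < v i)"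
        using \<open>a \<noteq> b\<close> linorder_neqE_nat by blast
      then show False using no_dom PQ by blast
    qed
    then show "v = w"
      using shift range PQ by (intro extensionalityI[where A = "{..<k}"]) (auto simp: PiE_iff)
  qed
  then have "card (F ` S) = card (L ` F ` S)" by (simp add: card_image)
  also have "\<dots> \<le> card {u \<in> PiE {..<k} (\<lambda>_. {..<M}). \<exists>j<k. u j = 0}"
  proof (rule card_mono)
    show "finite {u \<in> PiE {..<k} (\<lambda>_. {..<M}). \<exists>j<k. u j = 0}" by (auto simp: finite_PiE)
    show "L ` F ` S \<subseteq> {u \<in> PiE {..<k} (\<lambda>_. {..<M}). \<exists>j<k. u j = 0}"
    proof
      fix u assume "u \<in> L ` F ` S"
      then obtain P where P: "P \<in> S" "u = L (F P)" by auto
      have "Min (F P ` {..<k}) \<in> F P ` {..<k}" using \<open>k > 0\<close> by (intro Min_in) auto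
      then obtain j where j: "j < k" "F P j = Min (F P ` {..<k})" by auto
      have "F P i < M" if "i < k" for i using range[OF P(1)] that by auto
      then have "u \<in> PiE {..<k} (\<lambda>_. {..<M})"
        unfolding P(2) L_def by (auto simp: PiE_iff intro: le_less_trans[OF diff_le_self])
      moreover have "u j = 0" unfolding P(2) L_def using j by simp
      ultimately show "u \<in> {u \<in> PiE {..<k} (\<lambda>_. {..<M}). \<exists>j<k. u j = 0}" using j(1) by blast
    qed
  qed
  also have "\<dots> \<le> k * M ^ (k - 1)" by (rule card_PiE_with_zero_le)
  finally show ?thesis .
qed

definition rank_block :: "real set \<Rightarrow> nat \<Rightarrow> real \<Rightarrow> nat" where
  "rank_block D M y = card {d \<in> D. d \<le> y} * M div (card D + 1)"

lemma rank_block_less: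
  assumes "finite D" "M > 0"
  shows "rank_block D M y < M"
proof -
  have "card {d \<in> D. d \<le> y} * M \<le> card D * M"
    using assms(1) by (intro mult_le_mono1 card_mono) auto
  also have "\<dots> < M * (card D + 1)" using assms(2) by simp
  finally show ?thesis unfolding rank_block_def by (rule less_mult_imp_div_less)
qed

lemma rank_block_mono:
  assumes "finite D" "y \<le> y'"
  shows "rank_block D M y \<le> rank_block D M y'"
  unfolding rank_block_def using assms
  by (intro div_le_mono mult_le_mono1 card_mono) auto

lemma card_between_mult_less_if_rank_block_eq:
  assumes "finite D" "rank_block D M y = rank_block D M y'"
  shows "card (D \<inter> {min y y'<..max y y'}) * M < card D + 1"
proof -
  have ordered: "card (D \<inter> {u<..v}) * M < card D + 1"
    if "u \<le> v" "rank_block D M u = rank_block D M v" for u v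
  proof -
    have "D \<inter> {u<..v} = {d \<in> D. d \<le> v} - {d \<in> D. d \<le> u}" by auto
    then have "card (D \<inter> {u<..v}) = card {d \<in> D. d \<le> v} - card {d \<in> D. d \<le> u}"
      using assms(1) \<open>u \<le> v\<close> by (simp add: card_Diff_subset subset_iff)
    moreover have "card {d \<in> D. d \<le> u} \<le> card {d \<in> D. d \<le> v}"
      using assms(1) \<open>u \<le> v\<close> by (intro card_mono) auto
    ultimately show ?thesis
      using diff_mult_less_if_mult_div_eq that(2) unfolding rank_block_def by simp
  qed
  show ?thesis
  proof (cases "y \<le> y'")
    case True
    then show ?thesis using ordered[of y y'] assms(2) by (simp add: min_absorb1 max_absorb2)
  next
    case False
    then show ?thesis using ordered[of y' y] assms(2) by (simp add: min_absorb2 max_absorb1)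
  qed
qed

lemma strictly_monotone_oriented_block:
  assumes "strictly_monotone g" "finite D" "M > 0"
  shows "\<exists>h :: real \<Rightarrow> nat. (\<forall>y. h y < M) \<and>
    (\<forall>y y'. h y = h y' \<longrightarrow> rank_block D M y = rank_block D M y') \<and>
    (\<forall>y y'. h y < h y' \<longrightarrow> g y < g y')"
  using assms(1) unfolding strictly_monotone_def
proof
  assume inc: "\<forall>x y. x < y \<longrightarrow> g x < g y"
  show ?thesis
  proof (intro exI[of _ "rank_block D M"] conjI allI impI)
    fix y y' assume "rank_block D M y < rank_block D M y'"
    then have "y < y'" using rank_block_mono[OF assms(2), of y' y M] by linarith
    then show "g y < g y'" using inc by blast
  qed (use rank_block_less[OF assms(2,3)] in auto)
next
  assume dec: "\<forall>x y. x < y \<longrightarrow> g y < g x"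
  have less: "rank_block D M y < M" for y using rank_block_less[OF assms(2,3)] .
  show ?thesis
  proof (intro exI[of _ "\<lambda>y. M - 1 - rank_block D M y"] conjI allI impI)
    fix y y' assume "M - 1 - rank_block D M y = M - 1 - rank_block D M y'"
    then show "rank_block D M y = rank_block D M y'" using less[of y] less[of y'] by linarith
  next
    fix y y' assume "M - 1 - rank_block D M y < M - 1 - rank_block D M y'"
    then have "y' < y" using rank_block_mono[OF assms(2), of y y' M] less[of y] less[of y'] by linarith
    then show "g y < g y'" using dec by blast
  qed (use assms(3) in auto)
qed

lemma rep_count_le_card_fibre:
  assumes "\<forall>i<k. finite (B i)"
  shows "rep_count k (\<lambda>i. g i ` B i) x \<le> card {P \<in> PiE {..<k} B. (\<Sum>i<k. g i (P i)) = x}"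
    (is "_ \<le> card ?S")
proof -
  let ?h = "\<lambda>P. restrict (\<lambda>i. g i (P i)) {..<k}"
  have "{a \<in> PiE {..<k} (\<lambda>i. g i ` B i). (\<Sum>i<k. a i) = x} \<subseteq> ?h ` ?S"
  proof
    fix a assume a: "a \<in> {a \<in> PiE {..<k} (\<lambda>i. g i ` B i). (\<Sum>i<k. a i) = x}"
    then have "\<forall>i\<in>{..<k}. \<exists>b\<in>B i. a i = g i b" by (auto simp: PiE_iff)
    then obtain f where f: "\<forall>i\<in>{..<k}. f i \<in> B i \<and> a i = g i (f i)" by metis
    have "a = ?h (restrict f {..<k})" using f a by (auto simp: PiE_iff extensional_def fun_eq_iff)
    moreover have "restrict f {..<k} \<in> ?S" using f a by auto
    ultimately show "a \<in> ?h ` ?S" by blast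
  qed
  moreover have "finite ?S" using assms by (auto intro: finite_subset[OF _ finite_PiE])
  ultimately have "rep_count k (\<lambda>i. g i ` B i) x \<le> card (?h ` ?S)"
    unfolding rep_count_def by (intro card_mono) auto
  also have "\<dots> \<le> card ?S" using \<open>finite ?S\<close> by (rule card_image_le)
  finally show ?thesis .
qed

lemma card_fibre_le_card_close_pairs:
  fixes B :: "nat \<Rightarrow> real set" and g :: "nat \<Rightarrow> real \<Rightarrow> real" and M :: nat
  assumes "k > 0" and B_g: "\<forall>i<k. finite (B i) \<and> strictly_monotone (g i)" and "M > 0"
  shows "card {P \<in> PiE {..<k} B. (\<Sum>i<k. g i (P i)) = x} \<le>
     card {(P, P'). P \<in> PiE {..<k} B \<and> P' \<in> PiE {..<k} B \<and> P \<noteq> P' \<and>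
            (\<Sum>i<k. g i (P i)) = x \<and> (\<Sum>i<k. g i (P' i)) = x \<and>
            (\<forall>i<k. n_B (B i) (P i) (P' i) * M < card (BBB (B i)) + 1)} + k * M ^ (k - 1)"
    (is "card ?S \<le> card ?T + _")
proof -
  have "\<forall>i\<in>{..<k}. \<exists>h :: real \<Rightarrow> nat. (\<forall>y. h y < M) \<and>
      (\<forall>y y'. h y = h y' \<longrightarrow> rank_block (BBB (B i)) M y = rank_block (BBB (B i)) M y') \<and>
      (\<forall>y y'. h y < h y' \<longrightarrow> g i y < g i y')"
    using B_g \<open>M > 0\<close> by (auto intro!: strictly_monotone_oriented_block finite_BBB)
  then obtain h where h: "\<forall>i\<in>{..<k}. (\<forall>y. h i y < M) \<and>
      (\<forall>y y'. h i y = h i y' \<longrightarrow> rank_block (BBB (B i)) M y = rank_block (BBB (B i)) M y') \<and>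
      (\<forall>y y'. h i y < h i y' \<longrightarrow> g i y < g i y')"
    by metis
  define F where "F P = (\<lambda>i\<in>{..<k}. h i (P i))" for P :: "nat \<Rightarrow> real"
  have fin_S: "finite ?S" using B_g by (auto intro: finite_subset[OF _ finite_PiE])
  have card_labels: "card (F ` ?S) \<le> k * M ^ (k - 1)"
  proof (rule card_image_le_if_no_strict_domination[OF \<open>k > 0\<close>])
    show "F P \<in> PiE {..<k} (\<lambda>_. {..<M})" for P using h unfolding F_def by auto
    fix P Q assume "P \<in> ?S" "Q \<in> ?S"
    show "\<not> (\<forall>i<k. F P i < F Q i)"
    proof
      assume "\<forall>i<k. F P i < F Q i"
      then have "\<forall>i<k. g i (P i) < g i (Q i)" using h unfolding F_def by simp
      then have "(\<Sum>i<k. g i (P i)) < (\<Sum>i<k. g i (Q i))"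
        using \<open>k > 0\<close> by (intro sum_strict_mono) auto
      then show False using \<open>P \<in> ?S\<close> \<open>Q \<in> ?S\<close> by simp
    qed
  qed
  have "(P, Q) \<in> ?T" if PQ: "P \<in> ?S" "Q \<in> ?S" "P \<noteq> Q" "F P = F Q" for P Q
  proof -
    have "n_B (B i) (P i) (Q i) * M < card (BBB (B i)) + 1" if "i < k" for i
    proof -
      have "h i (P i) = h i (Q i)" using fun_cong[OF PQ(4), of i] that unfolding F_def by simp
      then have "rank_block (BBB (B i)) M (P i) = rank_block (BBB (B i)) M (Q i)"
        using h that by blast
      then show ?thesis
        unfolding n_B_def using B_g that by (intro card_between_mult_less_if_rank_block_eq finite_BBB) auto
    qed
    then show "(P, Q) \<in> ?T" using PQ by simp
  qed
  then have "{(P, Q). P \<in> ?S \<and> Q \<in> ?S \<and> P \<noteq> Q \<and> F P = F Q} \<subseteq> ?T" by blast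
  moreover have "finite ?T"
    by (rule finite_subset[of _ "PiE {..<k} B \<times> PiE {..<k} B"]) (use B_g in \<open>auto intro!: finite_PiE\<close>)
  ultimately have "card {(P, Q). P \<in> ?S \<and> Q \<in> ?S \<and> P \<noteq> Q \<and> F P = F Q} \<le> card ?T"
    by (simp add: card_mono)
  then show ?thesis
    using card_le_card_collisions_plus_card_image[OF fin_S, of F] card_labels by linarith
qed

lemma exists_block_count:
  fixes \<rho> :: real
  assumes "k \<ge> 2" "\<rho> \<ge> 2 * real k"
  obtains M :: nat
  where "M \<ge> 1" "real (k * M ^ (k - 1)) \<le> \<rho> ^ (k - 1) / 2" "\<rho> \<le> 4 * real k * real M"
proof
  define z where "z = \<rho> / (2 * real k)"
  have "z \<ge> 1" unfolding z_def using assms by simp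
  then have floor_ge_1: "real_of_int \<lfloor>z\<rfloor> \<ge> 1" by simp
  then have nat_floor: "real (nat \<lfloor>z\<rfloor>) = real_of_int \<lfloor>z\<rfloor>" by simp
  have floor_ge_half: "z / 2 \<le> real (nat \<lfloor>z\<rfloor>)" using floor_ge_1 nat_floor by linarith
  have floor_le: "real (nat \<lfloor>z\<rfloor>) \<le> z" using nat_floor by linarith
  show "nat \<lfloor>z\<rfloor> \<ge> 1" using \<open>z \<ge> 1\<close> by linarith
  show "\<rho> \<le> 4 * real k * real (nat \<lfloor>z\<rfloor>)"
    using floor_ge_half assms unfolding z_def by (simp add: field_simps)
  have "2 * real k \<le> (2 * real k) ^ (k - 1)"
    using assms(1) power_increasing[of 1 "k - 1" "2 * real k"] by simp
  then have "z ^ (k - 1) \<le> \<rho> ^ (k - 1) / (2 * real k)"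
    using assms unfolding z_def power_divide by (intro divide_left_mono) auto
  moreover have "real (nat \<lfloor>z\<rfloor>) ^ (k - 1) \<le> z ^ (k - 1)" using floor_le by (intro power_mono) auto
  ultimately have "real k * real (nat \<lfloor>z\<rfloor>) ^ (k - 1) \<le> real k * (\<rho> ^ (k - 1) / (2 * real k))"
    by (intro mult_left_mono) auto
  then show "real (k * nat \<lfloor>z\<rfloor> ^ (k - 1)) \<le> \<rho> ^ (k - 1) / 2" using assms by simp
qed

lemma card_close_pairs_ge:
  fixes B :: "nat \<Rightarrow> real set" and g :: "nat \<Rightarrow> real \<Rightarrow> real" and \<rho> :: real
  assumes "k \<ge> 2" and B_g: "\<forall>i<k. finite (B i) \<and> strictly_monotone (g i)"
    and "\<rho> \<ge> 2 * real k" and rep: "\<rho> ^ (k - 1) \<le> real (rep_count k (\<lambda>i. g i ` B i) x)"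
  shows "\<rho> ^ (k - 1) / 2 \<le> real (card {(P, P'). P \<in> PiE {..<k} B \<and> P' \<in> PiE {..<k} B \<and> P \<noteq> P' \<and>
            (\<Sum>i<k. g i (P i)) = x \<and> (\<Sum>i<k. g i (P' i)) = x \<and>
            (\<forall>i<k. real (n_B (B i) (P i) (P' i)) \<le> 4 * real k * real (card (BBB (B i))) / \<rho>)})"
    (is "_ \<le> real (card ?U)")
proof -
  obtain M where M: "M \<ge> 1" "real (k * M ^ (k - 1)) \<le> \<rho> ^ (k - 1) / 2" "\<rho> \<le> 4 * real k * real M"
    using exists_block_count[OF assms(1,3)] .
  let ?T = "{(P, P'). P \<in> PiE {..<k} B \<and> P' \<in> PiE {..<k} B \<and> P \<noteq> P' \<and>
            (\<Sum>i<k. g i (P i)) = x \<and> (\<Sum>i<k. g i (P' i)) = x \<and>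
            (\<forall>i<k. n_B (B i) (P i) (P' i) * M < card (BBB (B i)) + 1)}"
  have "rep_count k (\<lambda>i. g i ` B i) x \<le> card {P \<in> PiE {..<k} B. (\<Sum>i<k. g i (P i)) = x}"
    using B_g by (intro rep_count_le_card_fibre) auto
  also have "\<dots> \<le> card ?T + k * M ^ (k - 1)"
    using assms(1) B_g M(1) by (intro card_fibre_le_card_close_pairs) auto
  finally have "rep_count k (\<lambda>i. g i ` B i) x \<le> card ?T + k * M ^ (k - 1)" .
  then have "\<rho> ^ (k - 1) / 2 \<le> real (card ?T)" using rep M(2) by linarith
  also have "card ?T \<le> card ?U"
  proof (rule card_mono)
    show "finite ?U"
      by (rule finite_subset[of _ "PiE {..<k} B \<times> PiE {..<k} B"]) (use B_g in \<open>auto intro!: finite_PiE\<close>)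
    have "real n \<le> 4 * real k * real m / \<rho>" if "n * M < m + 1" for n m
    proof -
      have "real (n * M) \<le> real m" using that by (simp only: of_nat_le_iff)
      have "real n * \<rho> \<le> real n * (4 * real k * real M)" using M(3) by (intro mult_left_mono) auto
      also have "\<dots> = 4 * real k * real (n * M)" by simp
      also have "\<dots> \<le> 4 * real k * real m" by (rule mult_left_mono[OF \<open>real (n * M) \<le> real m\<close>]) simp
      finally show ?thesis using assms(1,3) by (simp add: field_simps)
    qed
    then show "?T \<subseteq> ?U" by auto
  qed
  finally show ?thesis by simp
qed

theorem proposition3p2:
  fixes k :: nat
  assumes "k \<ge> 2"
  shows "\<exists>c C r0 :: real. c > 0 \<and> C > 0 \<and> r0 \<ge> 1 \<and>
    (\<forall>(B :: nat \<Rightarrow> real set) (g :: nat \<Rightarrow> real \<Rightarrow> real) (r :: real) (x :: real).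
       (\<forall>i<k. finite (B i) \<and> strictly_monotone (g i)) \<longrightarrow>
       r \<ge> r0 \<longrightarrow>
       (\<forall>i<k. r powr (1 / (real k - 1)) \<le> real (card (BBB (B i)))) \<longrightarrow>
       x \<in> sumset k (\<lambda>i. g i ` B i) \<longrightarrow>
       r \<le> real (rep_count k (\<lambda>i. g i ` B i) x) \<longrightarrow>
       real (rep_count k (\<lambda>i. g i ` B i) x) < 2 * r \<longrightarrow>
       c * r \<le> real (card {(P, P'). P \<in> PiE {..<k} B \<and> P' \<in> PiE {..<k} B \<and> P \<noteq> P' \<and>
            (\<Sum>i<k. g i (P i)) = x \<and> (\<Sum>i<k. g i (P' i)) = x \<and>
            (\<forall>i<k. real (n_B (B i) (P i) (P' i))
                     \<le> C * real (card (BBB (B i))) / r powr (1 / (real k - 1)))}))"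
proof -
  define r0 :: real where "r0 = (2 * real k) ^ (k - 1)"
  have "r0 \<ge> 1" unfolding r0_def using assms by (intro one_le_power) simp
  show ?thesis
  proof (rule exI[of _ "1 / 2"], rule exI[of _ "4 * real k"], rule exI[of _ r0], intro conjI allI impI)
    fix B :: "nat \<Rightarrow> real set" and g :: "nat \<Rightarrow> real \<Rightarrow> real" and r x :: real
    assume B_g: "\<forall>i<k. finite (B i) \<and> strictly_monotone (g i)" and "r \<ge> r0"
      and "\<forall>i<k. r powr (1 / (real k - 1)) \<le> real (card (BBB (B i)))"
      and "x \<in> sumset k (\<lambda>i. g i ` B i)"
      and rep: "r \<le> real (rep_count k (\<lambda>i. g i ` B i) x)"
      and "real (rep_count k (\<lambda>i. g i ` B i) x) < 2 * r"
    define \<rho> where "\<rho> = r powr (1 / (real k - 1))"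
    have "k - 1 > 0" "r \<ge> 0" using assms \<open>r \<ge> r0\<close> \<open>r0 \<ge> 1\<close> by auto
    then have \<rho>_root: "\<rho> = root (k - 1) r"
      unfolding \<rho>_def using assms by (simp add: root_powr_inverse of_nat_diff)
    have "2 * real k = root (k - 1) r0"
      unfolding r0_def using real_root_power_cancel[OF \<open>k - 1 > 0\<close>, of "2 * real k"] by simp
    then have "\<rho> \<ge> 2 * real k" unfolding \<rho>_root using \<open>k - 1 > 0\<close> \<open>r \<ge> r0\<close> by simp
    moreover have "\<rho> ^ (k - 1) = r" unfolding \<rho>_root using \<open>k - 1 > 0\<close> \<open>r \<ge> 0\<close> by simp
    ultimately show "1 / 2 * r \<le> real (card {(P, P'). P \<in> PiE {..<k} B \<and> P' \<in> PiE {..<k} B \<and>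
        P \<noteq> P' \<and> (\<Sum>i<k. g i (P i)) = x \<and> (\<Sum>i<k. g i (P' i)) = x \<and>
        (\<forall>i<k. real (n_B (B i) (P i) (P' i)) \<le> 4 * real k * real (card (BBB (B i))) / r powr (1 / (real k - 1)))})"
      using card_close_pairs_ge[OF assms B_g, of \<rho> x] rep unfolding \<rho>_def by simp
  qed (use assms \<open>r0 \<ge> 1\<close> in auto)
qed

end
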